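(* In the asymptotic framework described in the context, if $F_{\Sigma_n}(u)\to F_\Sigma(u)$ almost surely for almost every $u>0$, then $\lim_{n,d\to\infty}\frac{d_\lambda^n}{n}$ exists for every $\lambda>0$.
   Context: Asymptotic framework: a sequence of positive semidefinite matrices $\Sigma_n\in\mathbb{R}^{d\times d}$ indexed by $n$, with $d=d(n)$, $n,d\to\infty$, $d/n\to y\in[0,1)$. $F_{\Sigma_n}(u)=d^{-1}\sum_{i=1}^d\mathbb{I}(\lambda_i(\Sigma_n)\le u)$ is the empirical spectral distribution and $F_\Sigma$ a limiting distribution function. $d_\lambda^n=\mathrm{tr}(\Sigma_n(\Sigma_n+\lambda I)^{-1})$. *)

theory Defs
  imports "HOL-Probability.Probability" "Jordan_Normal_Form.Gauss_Jordan_Elimination"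
          "Jordan_Normal_Form.Char_Poly"
begin

definition psd_mat :: "nat \<Rightarrow> real mat \<Rightarrow> bool" where
  "psd_mat d A \<longleftrightarrow> A \<in> carrier_mat d d \<and> transpose_mat A = A \<and>
     (\<forall>v \<in> carrier_vec d. 0 \<le> v \<bullet> (A *\<^sub>v v))"

(* empirical spectral distribution: F_A(u) = d^{-1} #{i. lambda_i(A) <= u},
   eigenvalues counted with algebraic multiplicity (order as roots of char_poly) *)
definition esd :: "nat \<Rightarrow> real mat \<Rightarrow> real \<Rightarrow> real" where
  "esd d A u = (\<Sum>a\<in>{a. poly (char_poly A) a = 0 \<and> a \<le> u}. real (order a (char_poly A))) / real d"

definition dlam :: "nat \<Rightarrow> real mat \<Rightarrow> real \<Rightarrow> real" where
  "dlam d A lam = (let B = A * the (mat_inverse (A + lam \<cdot>\<^sub>m 1\<^sub>m d)) in \<Sum>i<d. B $$ (i, i))"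

end

theory Submission
  imports Defs "Jordan_Normal_Form.Schur_Decomposition"
    "Jordan_Normal_Form.Jordan_Normal_Form_Uniqueness" "HOL-Real_Asymp.Real_Asymp"
begin

(* The eigenvalues e_1, ..., e_d of the PSD matrix Sigma_n are real and nonnegative, and a real
   Schur triangularisation of Sigma_n gives d_lambda = sum_i e_i / (e_i + lambda). Since
   e / (e + lambda) is the integral of lambda / (t + lambda)^2 over (0, e),
     d_lambda / d = integral over t > 0 of  lambda / (t + lambda)^2 * (1 - F_{Sigma_n}(t)).
   The integrands are dominated by the integrable weight lambda / (t + lambda)^2, so by dominated
   convergence d_lambda / d tends to the same integral with F_Sigma in place of F_{Sigma_n};
   multiplying by d / n --> y gives the limit of d_lambda / n. *)

lemma psd_mat_quadratic_form_nonneg: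
  assumes "psd_mat n A"
  shows "0 \<le> (\<Sum>i<n. \<Sum>j<n. A $$ (i,j) * (z i * z j))"
proof -
  have A: "A \<in> carrier_mat n n" using assms unfolding psd_mat_def by auto
  let ?x = "vec n z"
  have "0 \<le> ?x \<bullet> (A *\<^sub>v ?x)" using assms unfolding psd_mat_def by auto
  also have "?x \<bullet> (A *\<^sub>v ?x) = (\<Sum>i<n. z i * (\<Sum>j<n. A $$ (i,j) * z j))"
    using A
    by (auto simp: scalar_prod_def mult_mat_vec_def row_def atLeast0LessThan intro!: sum.cong)
  also have "\<dots> = (\<Sum>i<n. \<Sum>j<n. A $$ (i,j) * (z i * z j))"
    by (auto simp: sum_distrib_left intro!: sum.cong)
  finally show ?thesis .
qed

lemma symmetric_mat_hermitian_form:
  fixes A :: "real mat" and v :: "nat \<Rightarrow> complex"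
  assumes A: "A \<in> carrier_mat n n" and sym: "transpose_mat A = A"
  shows "(\<Sum>i<n. cnj (v i) * (\<Sum>j<n. of_real (A $$ (i,j)) * v j)) =
    of_real ((\<Sum>i<n. \<Sum>j<n. A $$ (i,j) * (Re (v i) * Re (v j))) +
             (\<Sum>i<n. \<Sum>j<n. A $$ (i,j) * (Im (v i) * Im (v j))))"
    (is "?S = of_real ?q")
proof (rule complex_eqI)
  have Re_term: "Re (cnj (v i) * (of_real (A $$ (i,j)) * v j)) =
      A $$ (i,j) * (Re (v i) * Re (v j)) + A $$ (i,j) * (Im (v i) * Im (v j))" for i j
    by (simp add: algebra_simps)
  have "Re ?S = (\<Sum>i<n. \<Sum>j<n.
      A $$ (i,j) * (Re (v i) * Re (v j)) + A $$ (i,j) * (Im (v i) * Im (v j)))"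
    unfolding Re_sum sum_distrib_left Re_term ..
  then show "Re ?S = Re (of_real ?q)" by (simp add: sum.distrib)
next
  have A_sym: "A $$ (j,i) = A $$ (i,j)" if "i < n" "j < n" for i j
    using A that by (metis carrier_matD index_transpose_mat(1) sym)
  have Im_term: "Im (cnj (v i) * (of_real (A $$ (i,j)) * v j)) =
      A $$ (i,j) * (Re (v i) * Im (v j)) - A $$ (i,j) * (Im (v i) * Re (v j))" for i j
    by (simp add: algebra_simps)
  have "Im ?S = (\<Sum>i<n. \<Sum>j<n.
      A $$ (i,j) * (Re (v i) * Im (v j)) - A $$ (i,j) * (Im (v i) * Re (v j)))"
    unfolding Im_sum sum_distrib_left Im_term ..
  also have "\<dots> = (\<Sum>i<n. \<Sum>j<n. A $$ (i,j) * (Re (v i) * Im (v j))) -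
      (\<Sum>i<n. \<Sum>j<n. A $$ (i,j) * (Im (v i) * Re (v j)))"
    by (simp add: sum_subtractf)
  also have "(\<Sum>i<n. \<Sum>j<n. A $$ (i,j) * (Im (v i) * Re (v j))) =
      (\<Sum>i<n. \<Sum>j<n. A $$ (i,j) * (Re (v i) * Im (v j)))"
    by (subst sum.swap) (auto intro!: sum.cong simp: A_sym mult.commute)
  finally show "Im ?S = Im (of_real ?q)" by simp
qed

lemma psd_mat_eigenvalue_nonneg:
  fixes A :: "real mat"
  assumes psd: "psd_mat n A" and ev: "eigenvector (map_mat complex_of_real A) v a"
  shows "Im a = 0 \<and> 0 \<le> Re a"
proof -
  have A: "A \<in> carrier_mat n n" and sym: "transpose_mat A = A"
    using psd unfolding psd_mat_def by auto
  have v: "v \<in> carrier_vec n" "v \<noteq> 0\<^sub>v n" and eq: "map_mat complex_of_real A *\<^sub>v v = a \<cdot>\<^sub>v v"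
    using ev A unfolding eigenvector_def by auto
  define S where "S = (\<Sum>i<n. cnj (v $ i) * (map_mat complex_of_real A *\<^sub>v v) $ i)"
  define r where "r = (\<Sum>i<n. (cmod (v $ i))^2)"
  define q where "q = (\<Sum>i<n. \<Sum>j<n. A $$ (i,j) * (Re (v $ i) * Re (v $ j))) +
    (\<Sum>i<n. \<Sum>j<n. A $$ (i,j) * (Im (v $ i) * Im (v $ j)))"
  have "S = (\<Sum>i<n. cnj (v $ i) * (\<Sum>j<n. of_real (A $$ (i,j)) * v $ j))"
    unfolding S_def using A v
    by (auto simp: scalar_prod_def mult_mat_vec_def row_def atLeast0LessThan intro!: sum.cong)
  also have "\<dots> = of_real q"
    unfolding q_def by (rule symmetric_mat_hermitian_form[OF A sym])
  finally have S_q: "S = of_real q" .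
  have "cnj z * (a * z) = a * of_real ((cmod z)^2)" for z
    by (metis complex_norm_square mult.commute mult.left_commute)
  then have S_r: "S = a * of_real r"
    unfolding S_def eq r_def using v by (auto simp: sum_distrib_left intro!: sum.cong)
  obtain i0 where "i0 < n" "v $ i0 \<noteq> 0"
    using v by (metis eq_vecI carrier_vecD index_zero_vec(1,2))
  then have "r > 0" unfolding r_def by (intro sum_pos2[of _ i0]) auto
  moreover have "q \<ge> 0"
    unfolding q_def using psd_mat_quadratic_form_nonneg[OF psd] by (simp add: add_nonneg_nonneg)
  ultimately have "a = of_real (q / r)" "q / r \<ge> 0"
    using S_q S_r by (auto simp: field_simps)
  then show ?thesis by simp
qed

lemma psd_mat_char_poly_eq_prod:
  fixes A :: "real mat"
  assumes psd: "psd_mat n A"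
  obtains es where "length es = n" "\<forall>e\<in>set es. 0 \<le> e"
    "char_poly A = (\<Prod>e\<leftarrow>es. [:-e, 1:])"
proof -
  interpret map_poly_inj_idom_hom "of_real :: real \<Rightarrow> complex" ..
  have A: "A \<in> carrier_mat n n" using psd unfolding psd_mat_def by auto
  let ?Ac = "map_mat complex_of_real A"
  have Ac: "?Ac \<in> carrier_mat n n" using A by auto
  obtain as where as: "char_poly ?Ac = (\<Prod>a\<leftarrow>as. [:-a, 1:])" "length as = n"
    using char_poly_factorized[OF Ac] by auto
  have as_real: "Im a = 0 \<and> 0 \<le> Re a" if "a \<in> set as" for a
  proof -
    have "poly (char_poly ?Ac) a = 0" unfolding as(1) by (rule linear_poly_root[OF that])
    then obtain v where "eigenvector ?Ac v a"
      using eigenvalue_root_char_poly[OF Ac] unfolding eigenvalue_def by auto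
    from psd_mat_eigenvalue_nonneg[OF psd this] show ?thesis .
  qed
  define es where "es = map Re as"
  have as_es: "as = map complex_of_real es"
    unfolding es_def by (rule nth_equalityI) (auto simp: complex_eq_iff as_real)
  have "map_poly complex_of_real (char_poly A) = char_poly ?Ac"
    by (rule of_real_hom.char_poly_hom[OF A, symmetric])
  also have "\<dots> = map_poly complex_of_real (\<Prod>e\<leftarrow>es. [:-e, 1:])"
    unfolding as(1) as_es by (simp add: hom_prod_list o_def)
  finally have "char_poly A = (\<Prod>e\<leftarrow>es. [:-e, 1:])" by (rule injectivity)
  moreover have "length es = n" "\<forall>e\<in>set es. 0 \<le> e"
    using as(2) as_real by (auto simp: es_def)
  ultimately show ?thesis using that by blast
qed

lemma order_prod_list_linear:
  "Polynomial.order a (\<Prod>e\<leftarrow>es. [:-e, 1:]) = count_list es (a :: 'a :: idom)"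
proof (induct es)
  case (Cons e es)
  have "(\<Prod>e\<leftarrow>es. [:-e, 1:]) \<noteq> (0 :: 'a poly)"
    by (auto simp: prod_list_zero_iff)
  then have "Polynomial.order a ([:-e, 1:] * (\<Prod>e\<leftarrow>es. [:-e, 1:])) =
      Polynomial.order a [:-e, 1:] + Polynomial.order a (\<Prod>e\<leftarrow>es. [:-e, 1:])"
    by (intro order_mult) (metis mult_eq_0_iff pCons_eq_0_iff zero_neq_one)
  then show ?case using Cons by (simp add: order_linear')
qed (simp add: order_0I)

lemma esd_eq_count:
  assumes cp: "char_poly A = (\<Prod>e\<leftarrow>es. [:-e, 1:])"
  shows "esd d A u = real (length (filter (\<lambda>e. e \<le> u) es)) / real d"
proof -
  let ?es_u = "filter (\<lambda>e. e \<le> u) es"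
  have roots: "{a. poly (char_poly A) a = 0 \<and> a \<le> u} = set ?es_u"
    unfolding cp by (auto simp: poly_prod_list_zero_iff)
  have "count_list ?es_u a = count_list es a" if "a \<le> u" for a
    using that by (induct es) auto
  then have "(\<Sum>a\<in>{a. poly (char_poly A) a = 0 \<and> a \<le> u}. Polynomial.order a (char_poly A)) =
      (\<Sum>a\<in>set ?es_u. count_list ?es_u a)"
    unfolding roots by (intro sum.cong refl) (auto simp: cp order_prod_list_linear)
  also have "\<dots> = length ?es_u"
    by (rule sum_count_set) auto
  finally show ?thesis unfolding esd_def by (metis of_nat_sum)
qed

lemma esd_psd_bounds:
  assumes "psd_mat n A"
  shows "0 \<le> esd n A u" and "esd n A u \<le> 1"
proof -
  obtain es where "length es = n" "char_poly A = (\<Prod>e\<leftarrow>es. [:-e, 1:])"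
    using psd_mat_char_poly_eq_prod[OF assms] by metis
  then show "0 \<le> esd n A u" "esd n A u \<le> 1"
    by (auto simp: esd_eq_count divide_le_eq_1 length_filter_le)
qed

lemma mono_esd_psd:
  assumes "psd_mat n A"
  shows "mono (esd n A)"
proof -
  obtain es where "char_poly A = (\<Prod>e\<leftarrow>es. [:-e, 1:])"
    using psd_mat_char_poly_eq_prod[OF assms] by metis
  moreover have "length (filter (\<lambda>e. e \<le> u) es) \<le> length (filter (\<lambda>e. e \<le> v) es)"
    if "u \<le> v" for u v :: real
    using that by (induct es) auto
  ultimately show ?thesis
    by (auto intro!: monoI divide_right_mono simp: esd_eq_count)
qed

definition mat_trace :: "'a :: comm_ring_1 mat \<Rightarrow> 'a" where
  "mat_trace A = (\<Sum>i<dim_row A. A $$ (i,i))"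

lemma index_mult_mat_sum:
  "A \<in> carrier_mat n m \<Longrightarrow> B \<in> carrier_mat m k \<Longrightarrow> i < n \<Longrightarrow> j < k \<Longrightarrow>
    (A * B) $$ (i,j) = (\<Sum>l<m. A $$ (i,l) * B $$ (l,j))"
  by (auto simp: scalar_prod_def atLeast0LessThan intro!: sum.cong)

lemma mat_trace_mult_comm:
  assumes A: "A \<in> carrier_mat n m" and B: "B \<in> carrier_mat m n"
  shows "mat_trace (A * B) = mat_trace (B * A)"
proof -
  have "mat_trace (A * B) = (\<Sum>i<n. \<Sum>l<m. A $$ (i,l) * B $$ (l,i))"
    unfolding mat_trace_def using A B
    by (auto simp: index_mult_mat_sum simp del: index_mult_mat(1) intro!: sum.cong)
  also have "\<dots> = (\<Sum>l<m. \<Sum>i<n. B $$ (l,i) * A $$ (i,l))"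
    by (subst sum.swap) (simp add: mult.commute)
  also have "\<dots> = mat_trace (B * A)"
    unfolding mat_trace_def using A B
    by (auto simp: index_mult_mat_sum simp del: index_mult_mat(1) intro!: sum.cong)
  finally show ?thesis .
qed

lemma diag_mult_upper_triangular:
  fixes A B :: "'a :: comm_ring_1 mat"
  assumes A: "A \<in> carrier_mat n n" and B: "B \<in> carrier_mat n n"
    and "upper_triangular A" "upper_triangular B" and i: "i < n"
  shows "(A * B) $$ (i,i) = A $$ (i,i) * B $$ (i,i)"
proof -
  have "A $$ (i,l) * B $$ (l,i) = 0" if "l < n" "l \<noteq> i" for l
    using assms that by (cases "l < i") (auto simp: upper_triangular_def)
  then have "(\<Sum>l<n. A $$ (i,l) * B $$ (l,i)) = A $$ (i,i) * B $$ (i,i)"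
    using i by (subst sum.remove[of _ i]) (auto intro: sum.neutral)
  then show ?thesis using A B i by (simp add: index_mult_mat_sum del: index_mult_mat)
qed

lemma upper_triangular_left_inverse:
  fixes T R :: "'a :: field mat"
  assumes T: "T \<in> carrier_mat n n" and R: "R \<in> carrier_mat n n"
    and ut: "upper_triangular T" and diag: "\<And>i. i < n \<Longrightarrow> T $$ (i,i) \<noteq> 0"
    and inv: "R * T = 1\<^sub>m n"
  shows "upper_triangular R"
proof -
  have "R $$ (i,j) = 0" if "j < i" "i < n" for i j
    using that
  proof (induct j arbitrary: i rule: less_induct)
    case (less j)
    have "\<forall>l\<in>{..<n} - {j}. R $$ (i,l) * T $$ (l,j) = 0"
    proof
      fix l assume "l \<in> {..<n} - {j}"
      then show "R $$ (i,l) * T $$ (l,j) = 0"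
        using less ut T by (cases "l < j") (auto simp: upper_triangular_def)
    qed
    then have "(\<Sum>l<n. R $$ (i,l) * T $$ (l,j)) = R $$ (i,j) * T $$ (j,j)"
      using less by (simp add: sum.remove[of _ j] sum.neutral)
    moreover have "(R * T) $$ (i,j) = 0" using inv less by simp
    ultimately show ?case
      using T R less diag[of j] by (simp add: index_mult_mat_sum del: index_mult_mat)
  qed
  then show ?thesis using R by (auto simp: upper_triangular_def)
qed

lemma mat_trace_mult_left_inverse_upper_triangular:
  fixes B T R :: "'a :: field mat"
  assumes B: "B \<in> carrier_mat n n" and T: "T \<in> carrier_mat n n" and R: "R \<in> carrier_mat n n"
    and ut_B: "upper_triangular B" and ut_T: "upper_triangular T"
    and diag: "\<And>i. i < n \<Longrightarrow> T $$ (i,i) \<noteq> 0" and RT: "R * T = 1\<^sub>m n"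
  shows "mat_trace (B * R) = (\<Sum>i<n. B $$ (i,i) / T $$ (i,i))"
proof -
  have ut_R: "upper_triangular R"
    by (rule upper_triangular_left_inverse[OF T R ut_T diag RT])
  have "R $$ (i,i) = 1 / T $$ (i,i)" if "i < n" for i
    using diag_mult_upper_triangular[OF R T ut_R ut_T that] RT that diag[OF that]
    by (simp add: field_simps)
  then show ?thesis
    unfolding mat_trace_def using B R
    by (auto simp: diag_mult_upper_triangular[OF B R ut_B ut_R] simp del: index_mult_mat(1)
        intro!: sum.cong)
qed

lemma mat_inverse_Some_if_det_nonzero:
  fixes A :: "'a :: field mat"
  assumes A: "A \<in> carrier_mat n n" and "det A \<noteq> 0"
  obtains N where "mat_inverse A = Some N"
proof -
  have "A \<in> Units (ring_mat TYPE('a) n undefined)"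
    by (rule det_non_zero_imp_unit[OF A assms(2)])
  then show ?thesis
    using mat_inverse(1)[OF A, of undefined] that by (cases "mat_inverse A") auto
qed

lemma dlam_eq_sum:
  fixes A :: "real mat"
  assumes A: "A \<in> carrier_mat n n" and cp: "char_poly A = (\<Prod>e\<leftarrow>es. [:-e, 1:])"
    and nz: "\<forall>e\<in>set es. e + lam \<noteq> 0"
  shows "dlam n A lam = (\<Sum>e\<leftarrow>es. e / (e + lam))"
proof -
  obtain B P Q where "schur_decomposition A es = (B, P, Q)"
    by (cases "schur_decomposition A es") auto
  from schur_decomposition[OF A cp this] have sim: "similar_mat_wit A B P Q"
    and ut_B: "upper_triangular B" and diag_B: "diag_mat B = es" by auto
  from sim A have B: "B \<in> carrier_mat n n" and P: "P \<in> carrier_mat n n"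
    and Q: "Q \<in> carrier_mat n n" and QP: "Q * P = 1\<^sub>m n" and AB: "A = P * B * Q"
    unfolding similar_mat_wit_def Let_def by auto
  have len: "length es = n" using diag_B B by (auto simp: diag_mat_def)
  have B_ii: "B $$ (i,i) = es ! i" if "i < n" for i
    using that B unfolding diag_B[symmetric] by (auto simp: diag_mat_def)
  define M where "M = A + lam \<cdot>\<^sub>m 1\<^sub>m n"
  define T where "T = B + lam \<cdot>\<^sub>m 1\<^sub>m n"
  have "similar_mat_wit (char_matrix A (- lam)) (char_matrix B (- lam)) P Q"
    by (rule similar_mat_wit_char_matrix[OF sim])
  then have sim_MT: "similar_mat_wit M T P Q"
    using A B unfolding M_def T_def char_matrix_def by simp
  then have M: "M \<in> carrier_mat n n" and T: "T \<in> carrier_mat n n" and MT: "M = P * T * Q"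
    using A unfolding similar_mat_wit_def Let_def M_def by auto
  have ut_T: "upper_triangular T" using ut_B B unfolding T_def upper_triangular_def by auto
  have T_ii: "T $$ (i,i) = es ! i + lam" if "i < n" for i
    using that B B_ii unfolding T_def by auto
  then have T_ii_nz: "T $$ (i,i) \<noteq> 0" if "i < n" for i
    using that nz len by auto
  have "det M = det T"
    using sim_MT by (intro det_similar) (auto simp: similar_mat_def)
  also have "det T \<noteq> 0"
    unfolding det_upper_triangular[OF ut_T T] using T T_ii_nz
    by (auto simp: diag_mat_def prod_list_zero_iff)
  finally obtain N where inv: "mat_inverse M = Some N"
    using mat_inverse_Some_if_det_nonzero[OF M] by blast
  from mat_inverse(2)[OF M inv] have NM: "N * M = 1\<^sub>m n" and N: "N \<in> carrier_mat n n"
    by auto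
  define R where "R = Q * N * P"
  have R: "R \<in> carrier_mat n n" unfolding R_def using Q N P by auto
  have "R * T = Q * (N * M) * P"
    unfolding R_def MT using Q N P T QP by (simp add: assoc_mult_mat[of _ n n _ n _ n])
  then have RT: "R * T = 1\<^sub>m n" using Q P by (simp add: NM QP)
  have "dlam n A lam = mat_trace (P * (B * Q * N))"
    unfolding dlam_def Let_def M_def[symmetric] inv mat_trace_def
    using P B Q N by (simp add: AB assoc_mult_mat[of _ n n _ n _ n])
  also have "\<dots> = mat_trace (B * R)"
    using P B Q N unfolding R_def
    by (subst mat_trace_mult_comm[of _ n n]) (auto simp: assoc_mult_mat[of _ n n _ n _ n])
  also have "\<dots> = (\<Sum>i<n. es ! i / (es ! i + lam))"
    by (simp add: mat_trace_mult_left_inverse_upper_triangular[OF B T R ut_B ut_T T_ii_nz RT]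
        B_ii T_ii)
  also have "\<dots> = (\<Sum>e\<leftarrow>es. e / (e + lam))"
    by (simp add: sum_list_sum_nth len atLeast0LessThan)
  finally show ?thesis .
qed

lemma resolvent_weight_FTC:
  fixes lam :: real and b :: ereal
  assumes lam: "0 < lam" and b: "0 < b"
    and lim: "(((\<lambda>t. - lam / (t + lam)) \<circ> real_of_ereal) \<longlongrightarrow> L) (at_left b)"
  shows "set_integrable lborel (einterval 0 b) (\<lambda>t. lam / (t + lam)^2)"
    and "(LBINT t=0..b. lam / (t + lam)^2) = L + 1"
proof -
  have "((\<lambda>t. - lam / (t + lam)) has_real_derivative lam / (x + lam)^2) (at x)"
    and "isCont (\<lambda>t. lam / (t + lam)^2) x" if "0 < ereal x" for x
  proof -
    have "x + lam \<noteq> 0" using that lam by (simp add: zero_ereal_def)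
    then show "((\<lambda>t. - lam / (t + lam)) has_real_derivative lam / (x + lam)^2) (at x)"
      and "isCont (\<lambda>t. lam / (t + lam)^2) x"
      by (auto intro!: derivative_eq_intros continuous_intros simp: power2_eq_square)
  qed
  moreover have "(((\<lambda>t. - lam / (t + lam)) \<circ> real_of_ereal) \<longlongrightarrow> -1) (at_right 0)"
    using lam by (auto simp: zero_ereal_def ereal_tendsto_simps intro!: tendsto_eq_intros)
  ultimately show "set_integrable lborel (einterval 0 b) (\<lambda>t. lam / (t + lam)^2)"
    and "(LBINT t=0..b. lam / (t + lam)^2) = L + 1"
    using interval_integral_FTC_nonneg[OF b _ _ _ _ lim, of "\<lambda>t. lam / (t + lam)^2"] lam by auto
qed

lemma integrable_resolvent_weight:
  assumes "0 < lam"
  shows "integrable lborel (\<lambda>t. indicator {0<..} t * (lam / (t + lam)^2 :: real))"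
proof -
  have "(((\<lambda>t. - lam / (t + lam)) \<circ> real_of_ereal) \<longlongrightarrow> 0) (at_left \<infinity>)"
    unfolding ereal_tendsto_simps by real_asymp
  then have "set_integrable lborel (einterval 0 \<infinity>) (\<lambda>t. lam / (t + lam)^2)"
    by (rule resolvent_weight_FTC(1)[OF assms, rotated]) simp
  moreover have "einterval 0 \<infinity> = {0<..}" by (auto simp: einterval_def zero_ereal_def)
  ultimately show ?thesis by (simp add: set_integrable_def mult.commute)
qed

lemma has_bochner_integral_resolvent_weight:
  fixes lam e :: real
  assumes lam: "0 < lam" and e: "0 \<le> e"
  shows "has_bochner_integral lborel
    (\<lambda>t. indicator {0<..<e} t * (lam / (t + lam)^2)) (e / (e + lam))"
proof (cases "e = 0")
  case False
  with e have e: "0 < ereal e" by simp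
  have "(((\<lambda>t. - lam / (t + lam)) \<circ> real_of_ereal) \<longlongrightarrow> - lam / (e + lam)) (at_left (ereal e))"
    unfolding ereal_tendsto_simps using lam e by (auto intro!: tendsto_eq_intros)
  note FTC = resolvent_weight_FTC[OF lam e this]
  have "einterval 0 (ereal e) = {0<..<e}" by (auto simp: einterval_def zero_ereal_def)
  with FTC e lam show ?thesis
    by (auto simp: has_bochner_integral_iff set_integrable_def interval_lebesgue_integral_def
        set_lebesgue_integral_def mult.commute field_simps)
qed (simp add: has_bochner_integral_zero)

lemma has_bochner_integral_resolvent_count:
  fixes es :: "real list"
  assumes lam: "0 < lam" and nonneg: "\<forall>e\<in>set es. 0 \<le> e"
  shows "has_bochner_integral lborel
    (\<lambda>t. indicator {0<..} t * (lam / (t + lam)^2) * real (length (filter (\<lambda>e. t < e) es)))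
    (\<Sum>e\<leftarrow>es. e / (e + lam))"
  using nonneg
proof (induct es)
  case (Cons e es)
  then have "has_bochner_integral lborel (\<lambda>t. indicator {0<..<e} t * (lam / (t + lam)^2) +
      indicator {0<..} t * (lam / (t + lam)^2) * real (length (filter (\<lambda>e. t < e) es)))
    (e / (e + lam) + (\<Sum>e\<leftarrow>es. e / (e + lam)))"
    by (intro has_bochner_integral_add has_bochner_integral_resolvent_weight lam) auto
  then show ?case
    by (rule has_bochner_integral_cong[THEN iffD1, rotated 3])
      (auto simp: indicator_def algebra_simps add_divide_distrib)
qed (simp add: has_bochner_integral_zero)

lemma dlam_eq_integral_esd:
  assumes psd: "psd_mat n A" and lam: "0 < lam" and n_pos: "0 < n"
  shows "dlam n A lam / n =
    (\<integral>t. indicator {0<..} t * (lam / (t + lam)^2) * (1 - esd n A t) \<partial>lborel)"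
proof -
  obtain es where len: "length es = n" and nonneg: "\<forall>e\<in>set es. 0 \<le> e"
    and cp: "char_poly A = (\<Prod>e\<leftarrow>es. [:-e, 1:])"
    using psd_mat_char_poly_eq_prod[OF psd] by metis
  define f where
    "f t = indicator {0<..} t * (lam / (t + lam)^2) * real (length (filter (\<lambda>e. t < e) es))"
    for t :: real
  have A: "A \<in> carrier_mat n n" using psd unfolding psd_mat_def by auto
  have "dlam n A lam = (\<Sum>e\<leftarrow>es. e / (e + lam))"
    using dlam_eq_sum[OF A cp] nonneg lam by force
  also have "\<dots> = (\<integral>t. f t \<partial>lborel)"
    using has_bochner_integral_resolvent_count[OF lam nonneg]
    by (simp add: has_bochner_integral_integral_eq f_def)
  finally have dlam_f: "dlam n A lam = (\<integral>t. f t \<partial>lborel)" .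
  have "1 - esd n A t = real (length (filter (\<lambda>e. t < e) es)) / n" for t
    using sum_length_filter_compl[of "\<lambda>e. e \<le> t" es] n_pos len
    by (simp add: esd_eq_count[OF cp] not_le field_simps)
  then have "(\<integral>t. indicator {0<..} t * (lam / (t + lam)^2) * (1 - esd n A t) \<partial>lborel) =
      (\<integral>t. f t / n \<partial>lborel)"
    by (simp add: f_def)
  then show ?thesis by (simp add: dlam_f)
qed

lemma tendsto_integral_bounded_factor:
  fixes w :: "'a \<Rightarrow> real"
  assumes w: "integrable M w"
    and g: "\<And>n. g n \<in> borel_measurable M" "g' \<in> borel_measurable M"
    and bounded: "\<And>n x. \<bar>g n x\<bar> \<le> 1"
    and lim: "AE x in M. w x \<noteq> 0 \<longrightarrow> (\<lambda>n. g n x) \<longlonglongrightarrow> g' x"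
  shows "(\<lambda>n. \<integral>x. w x * g n x \<partial>M) \<longlonglongrightarrow> (\<integral>x. w x * g' x \<partial>M)"
proof (rule integral_dominated_convergence[where w="\<lambda>x. \<bar>w x\<bar>"])
  show "AE x in M. (\<lambda>n. w x * g n x) \<longlonglongrightarrow> w x * g' x"
    using lim by eventually_elim (auto intro: tendsto_mult)
  show "AE x in M. norm (w x * g n x) \<le> \<bar>w x\<bar>" for n
    using bounded[of n] by (auto simp: abs_mult intro!: AE_I2 mult_left_le)
qed (use w g in auto)

lemma tendsto_dlam_div_dim:
  fixes Sigma :: "nat \<Rightarrow> real mat" and d :: "nat \<Rightarrow> nat" and F :: "real \<Rightarrow> real"
  assumes psd: "\<And>n. psd_mat (d n) (Sigma n)" and d_inf: "filterlim d at_top sequentially"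
    and "mono F" and lam: "0 < lam"
    and conv: "AE u in lborel. u > 0 \<longrightarrow> (\<lambda>n. esd (d n) (Sigma n) u) \<longlonglongrightarrow> F u"
  shows "(\<lambda>n. dlam (d n) (Sigma n) lam / d n) \<longlonglongrightarrow>
    (\<integral>t. indicator {0<..} t * (lam / (t + lam)^2) * (1 - F t) \<partial>lborel)"
proof -
  define w where "w t = indicator {0<..} t * (lam / (t + lam)^2)" for t :: real
  have "(\<lambda>n. \<integral>t. w t * (1 - esd (d n) (Sigma n) t) \<partial>lborel) \<longlonglongrightarrow>
      (\<integral>t. w t * (1 - F t) \<partial>lborel)"
  proof (rule tendsto_integral_bounded_factor)
    show "integrable lborel w"
      unfolding w_def by (rule integrable_resolvent_weight[OF lam])
    show "(\<lambda>t. 1 - esd (d n) (Sigma n) t) \<in> borel_measurable lborel" for n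
      using borel_measurable_mono[OF mono_esd_psd[OF psd]] by measurable
    show "(\<lambda>t. 1 - F t) \<in> borel_measurable lborel"
      using borel_measurable_mono[OF \<open>mono F\<close>] by measurable
    show "\<bar>1 - esd (d n) (Sigma n) t\<bar> \<le> 1" for n t
      using esd_psd_bounds[OF psd, of n t] by simp
    show "AE t in lborel. w t \<noteq> 0 \<longrightarrow> (\<lambda>n. 1 - esd (d n) (Sigma n) t) \<longlonglongrightarrow> 1 - F t"
      using conv by eventually_elim (auto simp: w_def intro: tendsto_diff)
  qed
  moreover have "\<forall>\<^sub>F n in sequentially. 0 < d n"
    using d_inf by (metis eventually_gt_at_top filterlim_iff)
  then have "\<forall>\<^sub>F n in sequentially.
      (\<integral>t. w t * (1 - esd (d n) (Sigma n) t) \<partial>lborel) = dlam (d n) (Sigma n) lam / d n"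
    by eventually_elim (simp add: dlam_eq_integral_esd[OF psd lam] w_def)
  ultimately show ?thesis
    unfolding w_def by (rule Lim_transform_eventually)
qed

theorem lemmaA2:
  fixes Sigma :: "nat \<Rightarrow> real mat" and d :: "nat \<Rightarrow> nat" and y :: real
    and F :: "real \<Rightarrow> real"
  assumes psd: "\<And>n. psd_mat (d n) (Sigma n)"
    and d_inf: "filterlim d at_top sequentially"
    and ratio: "(\<lambda>n. real (d n) / real n) \<longlonglongrightarrow> y"
    and y_nonneg: "0 \<le> y" and y_lt1: "y < 1"
    and F_dist: "\<exists>M. real_distribution M \<and> F = cdf M"
    and conv: "AE u in lborel. u > 0 \<longrightarrow> (\<lambda>n. esd (d n) (Sigma n) u) \<longlonglongrightarrow> F u"
  shows "\<forall>lam > 0. convergent (\<lambda>n. dlam (d n) (Sigma n) lam / real n)"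
proof (intro allI impI)
  fix lam :: real assume lam: "lam > 0"
  have "mono F"
    using F_dist by (auto intro!: monoI finite_borel_measure.cdf_nondecreasing
        real_distribution.finite_borel_measure_M)
  from tendsto_mult[OF ratio tendsto_dlam_div_dim[OF psd d_inf this lam conv]]
  have "convergent (\<lambda>n. real (d n) / n * (dlam (d n) (Sigma n) lam / d n))"
    unfolding convergent_def by blast
  moreover have
    "real (d n) / n * (dlam (d n) (Sigma n) lam / d n) = dlam (d n) (Sigma n) lam / n" for n
    by (cases "d n = 0") (simp_all add: dlam_def)
  ultimately show "convergent (\<lambda>n. dlam (d n) (Sigma n) lam / real n)" by simp
qed

end
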